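(* Let $d\ge 1$. Given a set of $d+3$ points in $\mathbb{R}^d$, there are two disjoint subsets $A$ and $B$ of it with $|A|=|B|$ such that $\mathrm{conv}(A)\cap\mathrm{conv}(B)\neq\emptyset$. *)

theory Defs
  imports "HOL-Analysis.Analysis"
begin

end

theory Submission
  imports Defs
begin

text \<open>
  The affine relations \<open>u\<close> of a finite set \<open>S\<close> (\<open>\<Sum>u = 0\<close>, \<open>\<Sum>u x x = 0\<close>) form a space of
  dimension at least \<open>|S| - d - 1\<close>, which is \<open>2\<close> here. Any nonzero relation \<open>u\<close> is a Radon
  partition: the convex hulls of \<open>{u > 0}\<close> and \<open>{u < 0}\<close> meet. Rotating a nonzero relation
  \<open>u\<^sub>t = cos t \<cdot> l + sin t \<cdot> m\<close> inside a two-dimensional space of relations, \<open>u\<^sub>\<pi> = -u\<^sub>0\<close>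
  swaps the two sign classes, so by connectedness of \<open>[0, \<pi>]\<close> some \<open>u\<^sub>t\<close> has both sign
  classes of size at most \<open>|S|/2\<close>. Padding the smaller class with points where
  \<open>u\<^sub>t\<close> vanishes equalizes the sizes without shrinking the hulls.
\<close>

definition affine_relation :: "'a::real_vector set \<Rightarrow> ('a \<Rightarrow> real) \<Rightarrow> bool" where
  "affine_relation S u \<longleftrightarrow> sum u S = 0 \<and> (\<Sum>x\<in>S. u x *\<^sub>R x) = 0"

lemma affine_relation_lincomb:
  assumes "affine_relation S l" "affine_relation S m"
  shows "affine_relation S (\<lambda>x. a * l x + b * m x)"
  using assms
  by (simp add: affine_relation_def sum.distrib scaleR_add_left
           flip: sum_distrib_left scaleR_scaleR scaleR_sum_right)

lemma sum_split_sign: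
  fixes f :: "'b \<Rightarrow> 'a::comm_monoid_add"
  assumes "finite C" and "\<And>x. x \<in> C \<Longrightarrow> u x = 0 \<Longrightarrow> f x = 0"
  shows "sum f C = sum f {x\<in>C. 0 < u x} + sum f {x\<in>C. u x < (0::real)}"
proof -
  have "sum f C = sum f ({x\<in>C. 0 < u x} \<union> {x\<in>C. u x < 0})"
    using assms by (intro sum.mono_neutral_right) (auto, metis linorder_neqE_linordered_idom)
  also have "\<dots> = sum f {x\<in>C. 0 < u x} + sum f {x\<in>C. u x < 0}"
    using assms(1) by (intro sum.union_disjoint) auto
  finally show ?thesis .
qed

lemma convex_hull_sign_parts_meet:
  fixes C :: "'a::real_vector set"
  assumes "finite C" "affine_relation C u" "\<exists>v\<in>C. u v \<noteq> 0"
  shows "convex hull {x\<in>C. 0 < u x} \<inter> convex hull {x\<in>C. u x < 0} \<noteq> {}"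
proof -
  define P where "P = {x\<in>C. 0 < u x}"
  define N where "N = {x\<in>C. u x < 0}"
  have fin: "finite P" "finite N"
    using assms(1) by (auto simp: P_def N_def)
  have weights: "sum u P = - sum u N" and moments: "(\<Sum>x\<in>P. u x *\<^sub>R x) = - (\<Sum>x\<in>N. u x *\<^sub>R x)"
    using sum_split_sign[OF assms(1), of u u] sum_split_sign[OF assms(1), of u "\<lambda>x. u x *\<^sub>R x"] assms(2)
    by (auto simp: affine_relation_def P_def N_def eq_neg_iff_add_eq_0)
  define s where "s = sum u P"
  have "s > 0"
  proof -
    obtain v where v: "v \<in> C" "u v \<noteq> 0" using assms(3) by blast
    show ?thesis
    proof (cases "u v > 0")
      case True
      then have "v \<in> P" using v by (simp add: P_def)
      then show ?thesis unfolding s_def using fin by (intro sum_pos) (auto simp: P_def)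
    next
      case False
      then have "v \<in> N" using v by (simp add: N_def)
      then have "0 < sum (\<lambda>x. - u x) N" using fin by (intro sum_pos) (auto simp: N_def)
      then show ?thesis by (simp add: s_def weights sum_negf)
    qed
  qed
  define z where "z = (1 / s) *\<^sub>R (\<Sum>x\<in>P. u x *\<^sub>R x)"
  have "z \<in> convex hull P"
    unfolding convex_hull_finite[OF fin(1)]
  proof (intro CollectI exI[of _ "\<lambda>x. u x / s"] conjI ballI)
    show "0 \<le> u x / s" if "x \<in> P" for x using that \<open>s > 0\<close> by (simp add: P_def)
    show "(\<Sum>x\<in>P. u x / s) = 1" using \<open>s > 0\<close> by (simp add: s_def flip: sum_divide_distrib)
    show "(\<Sum>x\<in>P. (u x / s) *\<^sub>R x) = z" by (simp add: z_def scaleR_sum_right divide_inverse_commute)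
  qed
  moreover have "z \<in> convex hull N"
    unfolding convex_hull_finite[OF fin(2)]
  proof (intro CollectI exI[of _ "\<lambda>x. - u x / s"] conjI ballI)
    show "0 \<le> - u x / s" if "x \<in> N" for x using that \<open>s > 0\<close> by (simp add: N_def divide_le_0_iff)
    show "(\<Sum>x\<in>N. - u x / s) = 1" using \<open>s > 0\<close> by (simp add: s_def weights sum_negf flip: sum_divide_distrib)
    show "(\<Sum>x\<in>N. (- u x / s) *\<^sub>R x) = z" by (simp add: z_def moments scaleR_sum_right divide_inverse_commute sum_negf)
  qed
  ultimately show ?thesis unfolding P_def N_def by blast
qed

lemma affine_dependent_iff_affine_relation:
  assumes "finite S"
  shows "affine_dependent S \<longleftrightarrow> (\<exists>u. affine_relation S u \<and> (\<exists>v\<in>S. u v \<noteq> 0))"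
  unfolding affine_relation_def affine_dependent_explicit_finite[OF assms] by blast

lemma affine_relation_vanishing_at:
  fixes S :: "'a::euclidean_space set"
  assumes "finite S" "DIM('a) + 3 \<le> card S" "a \<in> S"
  obtains u where "affine_relation S u" "u a = 0" "\<exists>v\<in>S. u v \<noteq> 0"
proof -
  have "affine_dependent (S - {a})"
    using assms by (intro affine_dependent_biggerset) auto
  then obtain w where w: "affine_relation (S - {a}) w" "\<exists>v\<in>S - {a}. w v \<noteq> 0"
    using affine_dependent_iff_affine_relation assms(1) by blast
  define u where "u x = (if x = a then 0 else w x)" for x
  have "sum u S = sum w (S - {a})" "(\<Sum>x\<in>S. u x *\<^sub>R x) = (\<Sum>x\<in>S - {a}. w x *\<^sub>R x)"
    using assms(1,3) by (auto simp: sum.remove u_def intro!: sum.cong)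
  with w show ?thesis
    by (intro that[of u]) (auto simp: affine_relation_def u_def)
qed

lemma rotation_nonvanishing:
  fixes l m :: "'b \<Rightarrow> real" and t :: real
  assumes "b \<in> S" "l b \<noteq> 0" "m b = 0" "\<exists>v\<in>S. m v \<noteq> 0"
  shows "\<exists>v\<in>S. cos t * l v + sin t * m v \<noteq> 0"
proof (cases "cos t = 0")
  case True
  then have "sin t \<noteq> 0"
    using sin_cos_squared_add[of t] by auto
  with True assms(4) show ?thesis by auto
next
  case False
  with assms(1-3) show ?thesis by (intro bexI[of _ b]) auto
qed

lemma open_card_positive_gt:
  fixes g :: "'b \<Rightarrow> 'a::topological_space \<Rightarrow> real"
  assumes "finite S" "\<And>x. x \<in> S \<Longrightarrow> continuous_on UNIV (g x)"
  shows "open {t. k < card {x\<in>S. 0 < g x t}}"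
proof -
  have "{t. k < card {x\<in>S. 0 < g x t}} = (\<Union>T\<in>{T. T \<subseteq> S \<and> k < card T}. \<Inter>x\<in>T. {t. 0 < g x t})"
  proof (intro equalityI subsetI)
    fix t assume "t \<in> {t. k < card {x\<in>S. 0 < g x t}}"
    then show "t \<in> (\<Union>T\<in>{T. T \<subseteq> S \<and> k < card T}. \<Inter>x\<in>T. {t. 0 < g x t})"
      by (intro UN_I[of "{x\<in>S. 0 < g x t}"]) auto
  next
    fix t assume "t \<in> (\<Union>T\<in>{T. T \<subseteq> S \<and> k < card T}. \<Inter>x\<in>T. {t. 0 < g x t})"
    then obtain T where "T \<subseteq> {x\<in>S. 0 < g x t}" "k < card T" by blast
    moreover have "card T \<le> card {x\<in>S. 0 < g x t}"
      using calculation(1) assms(1) by (intro card_mono) auto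
    ultimately show "t \<in> {t. k < card {x\<in>S. 0 < g x t}}" by simp
  qed
  moreover have "open (\<Union>T\<in>{T. T \<subseteq> S \<and> k < card T}. \<Inter>x\<in>T. {t. 0 < g x t})"
  proof (intro open_UN ballI open_INT)
    fix T assume "T \<in> {T. T \<subseteq> S \<and> k < card T}"
    then show "finite T" using assms(1) finite_subset by blast
  next
    fix T x assume "T \<in> {T. T \<subseteq> S \<and> k < card T}" "x \<in> T"
    then show "open {t. 0 < g x t}"
      using open_Collect_less[OF continuous_on_const assms(2)] by auto
  qed
  ultimately show ?thesis by simp
qed

lemma rotation_balances_signs:
  fixes l m :: "'b \<Rightarrow> real"
  assumes "finite S"
  obtains t where "2 * card {x\<in>S. 0 < cos t * l x + sin t * m x} \<le> card S"
    "2 * card {x\<in>S. cos t * l x + sin t * m x < 0} \<le> card S"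
proof (rule ccontr)
  define f where "f t x = cos t * l x + sin t * m x" for t x
  define U where "U = {t. card S < 2 * card {x\<in>S. 0 < f t x}}"
  define W where "W = {t. card S < 2 * card {x\<in>S. f t x < 0}}"
  assume "\<not> thesis"
  have unbalanced: "t \<in> U \<union> W" for t
  proof -
    have "\<not> (2 * card {x\<in>S. 0 < f t x} \<le> card S \<and> 2 * card {x\<in>S. f t x < 0} \<le> card S)"
      using that \<open>\<not> thesis\<close> by (auto simp: f_def)
    then show ?thesis by (auto simp: U_def W_def)
  qed
  have cont: "continuous_on UNIV (\<lambda>t. f t x)" "continuous_on UNIV (\<lambda>t. - f t x)" for x
    unfolding f_def by (intro continuous_intros)+
  have half: "card S < 2 * k \<longleftrightarrow> card S div 2 < k" for k
    by auto
  have "open U"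
    using open_card_positive_gt[OF assms, of "\<lambda>x t. f t x"] cont by (simp add: U_def half)
  moreover have "open W"
    using open_card_positive_gt[OF assms, of "\<lambda>x t. - f t x"] cont by (simp add: W_def half)
  moreover have "U \<inter> W = {}"
  proof -
    have split: "card {x\<in>S. 0 < f t x} + card {x\<in>S. f t x < 0} \<le> card S" for t
      using assms by (subst card_Un_disjoint[symmetric]) (auto intro: card_mono)
    have "t \<notin> U \<inter> W" for t
      using split[of t] by (simp add: U_def W_def)
    then show ?thesis by blast
  qed
  moreover have "0 \<in> U \<longleftrightarrow> pi \<in> W"
    by (simp add: U_def W_def f_def)
  ultimately have "{0..pi} \<subseteq> U \<or> {0..pi} \<subseteq> W"
    using connectedD[OF connected_Icc \<open>open U\<close> \<open>open W\<close>, of 0 pi] unbalanced by blast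
  moreover have "0 \<in> {0..pi}" "pi \<in> {0..pi}"
    using pi_gt_zero by auto
  ultimately show False
    using \<open>U \<inter> W = {}\<close> \<open>0 \<in> U \<longleftrightarrow> pi \<in> W\<close> unbalanced by blast
qed

lemma exists_superset_equal_card_disjoint:
  assumes "finite S" "P \<subseteq> S" "N \<subseteq> S" "P \<inter> N = {}"
    and "card P \<le> card N" "2 * card N \<le> card S"
  obtains A where "P \<subseteq> A" "A \<subseteq> S - N" "card A = card N"
proof -
  have "card N \<le> card (S - N)"
    using assms by (simp add: card_Diff_subset finite_subset)
  moreover have "P \<subseteq> S - N"
    using assms(2,4) by blast
  ultimately show ?thesis
    using exists_subset_between[of P "card N" "S - N"] that assms(1,5) by auto
qed

lemma exists_disjoint_supersets_equal_card:
  assumes "finite S" "P \<subseteq> S" "N \<subseteq> S" "P \<inter> N = {}"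
    and "2 * card P \<le> card S" "2 * card N \<le> card S"
  obtains A B where "P \<subseteq> A" "N \<subseteq> B" "A \<subseteq> S" "B \<subseteq> S" "A \<inter> B = {}" "card A = card B"
proof (cases "card P \<le> card N")
  case True
  then obtain A where "P \<subseteq> A" "A \<subseteq> S - N" "card A = card N"
    using exists_superset_equal_card_disjoint[OF assms(1-4)] assms(6) by blast
  with assms(3) show ?thesis by (intro that[of A N]) auto
next
  case False
  then obtain B where "N \<subseteq> B" "B \<subseteq> S - P" "card B = card P"
    using exists_superset_equal_card_disjoint[OF assms(1,3,2)] assms(4,5) by (auto simp: Int_commute)
  with assms(2) show ?thesis by (intro that[of P B]) auto
qed

theorem corollary2:
  fixes S :: "'a::euclidean_space set"
  assumes "finite S" and "card S = DIM('a) + 3"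
  shows "\<exists>A B. A \<subseteq> S \<and> B \<subseteq> S \<and> A \<inter> B = {} \<and> card A = card B \<and>
              convex hull A \<inter> convex hull B \<noteq> {}"
proof -
  have "affine_dependent S"
    using assms by (intro affine_dependent_biggerset) auto
  then obtain l b where l: "affine_relation S l" and b: "b \<in> S" "l b \<noteq> 0"
    using affine_dependent_iff_affine_relation assms(1) by blast
  obtain m where m: "affine_relation S m" "m b = 0" "\<exists>v\<in>S. m v \<noteq> 0"
    using affine_relation_vanishing_at[OF assms(1) _ b(1)] assms(2) by auto
  obtain t where balanced: "2 * card {x\<in>S. 0 < cos t * l x + sin t * m x} \<le> card S"
      "2 * card {x\<in>S. cos t * l x + sin t * m x < 0} \<le> card S"
    using rotation_balances_signs[OF assms(1)] by blast
  define u where "u x = cos t * l x + sin t * m x" for x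
  have "affine_relation S u" "\<exists>v\<in>S. u v \<noteq> 0"
    unfolding u_def using affine_relation_lincomb[OF l m(1)] rotation_nonvanishing[of b S l m t] b m
    by auto
  then have meet: "convex hull {x\<in>S. 0 < u x} \<inter> convex hull {x\<in>S. u x < 0} \<noteq> {}"
    using convex_hull_sign_parts_meet[OF assms(1)] by blast
  have sign_classes: "{x\<in>S. 0 < u x} \<subseteq> S" "{x\<in>S. u x < 0} \<subseteq> S"
    "{x\<in>S. 0 < u x} \<inter> {x\<in>S. u x < 0} = {}"
    by auto
  obtain A B where AB: "{x\<in>S. 0 < u x} \<subseteq> A" "{x\<in>S. u x < 0} \<subseteq> B"
      "A \<subseteq> S" "B \<subseteq> S" "A \<inter> B = {}" "card A = card B"
    using exists_disjoint_supersets_equal_card[OF assms(1) sign_classes] balanced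
    unfolding u_def by blast
  with meet have "convex hull A \<inter> convex hull B \<noteq> {}"
    using hull_mono[OF AB(1)] hull_mono[OF AB(2)] by blast
  with AB show ?thesis by blast
qed

end
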